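(* Let $0\le t_r\le n$ and suppose at most $f\le n-t_r$ of the $n$ nodes fail. Then the algorithm TLCR described in the context, where the $k$-th call to TLCR on a node constitutes that node's $k$-th logical time-step, implements a $\mathrm{TSB}(t_r,0,0)$ communication primitive.
   Context: Asynchronous network model. There are $n$ nodes numbered $1,\dots,n$; nodes may fail only by crashing permanently, after which they send no messages. A network-level Broadcast sends a message to all $n$ nodes (including the sender). Every message sent to a node that does not fail is eventually delivered after an arbitrary finite delay, and messages between each pair of nodes are delivered in the order sent. $\mathrm{Receive}()$ waits for and returns the next delivered message. Algorithm TLCR (node $i$, receive threshold $t_r$). Persistent state: a list $\vec R$ of sets, initially the one-element list $[\{\}]$; $\vec R_k$ denotes its $k$-th element. On a call $\mathrm{TLCR}(m)$: append $\{\}$ to $\vec R$ and let $s=|\vec R|$; network-broadcast $\langle i,m,s,\vec R_{s-1}\rangle$; while $|\vec R_s|<t_r$: receive $\langle j,m',s',R'\rangle$; if $s'=s$, set $\vec R_s\leftarrow\vec R_s\cup\{\langle j,m'\rangle\}$; else if $s'>s$, set $\vec R_s\leftarrow\vec R_s\cup R'$ (messages with $s'<s$ are ignored). Return $(\{m'\mid\langle j,m'\rangle\in\vec R_s\},\{\})$. Threshold synchronous broadcast. A primitive, called once per logical time-step by each non-failed node with a message $m$ and returning a pair $(R,B)$ of message sets, provides $\mathrm{TSB}(t_r,t_b,t_s)$ if: (lock-step synchrony) a call at step $s$ returns (completing step $s$) unless the node fails first; (receive threshold) if node $i$'s call at step $s$ returns $(R,B)$, there is $N_R\subseteq\{1,\dots,n\}$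 with $|N_R|\ge t_r$ such that $R$ is exactly the set of messages broadcast by the nodes of $N_R$ in step $s$; (broadcast threshold) there is $N_B\subseteq\{1,\dots,n\}$ with $|N_B|\ge t_b$ such that $B$ is exactly the set of messages broadcast by the nodes of $N_B$ in step $s$; (spread threshold) each $m'\in B$ returned to any node at step $s$ is contained in the receive sets $R$ returned in step $s$ to at least $t_s$ nodes (counting nodes that fail before completing step $s$ but would otherwise have received $m'$). *)

theory Defs
  imports Main
begin

text \<open>Nodes are the natural numbers 1..n. A network message has the form
  <i, m, s, R> (sender, payload, step number, a set of (node, payload) pairs).\<close>

datatype 'm msg = Msg (msnd: nat) (mval: 'm) (mstep: nat) (mset: "(nat \<times> 'm) set")

text \<open>Rs i      : the persistent list R of node i (0-indexed HOL list; R_k of the paper is Rs i ! (k-1)).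
  busy i    : node i is currently inside a TLCR call.
  crashed i : node i has crashed.
  chan j i  : FIFO queue of messages sent by j to i and not yet received by i.
  sent i k  : payload broadcast by node i in its k-th call (k-th logical time-step).
  ret i k   : the pair (R,B) returned by node i's k-th call.\<close>

record 'm sys =
  Rs      :: "nat \<Rightarrow> (nat \<times> 'm) set list"
  busy    :: "nat \<Rightarrow> bool"
  crashed :: "nat \<Rightarrow> bool"
  chan    :: "nat \<Rightarrow> nat \<Rightarrow> 'm msg list"
  sent    :: "nat \<Rightarrow> nat \<Rightarrow> 'm option"
  ret     :: "nat \<Rightarrow> nat \<Rightarrow> ('m set \<times> 'm set) option"

definition init_sys :: "'m sys" where
  "init_sys = \<lparr> Rs = (\<lambda>_. [{}]), busy = (\<lambda>_. False), crashed = (\<lambda>_. False),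
               chan = (\<lambda>_ _. []), sent = (\<lambda>_ _. None), ret = (\<lambda>_ _. None) \<rparr>"

datatype 'm act = Invoke nat 'm | Recv nat nat | Return nat | Crash nat

text \<open>Invoke i m: node i starts a call TLCR(m): append {} to R, s = |R|, broadcast
  <i,m,s,R_{s-1}> to all n nodes (atomically enqueued on every FIFO channel).
  Recv i j: inside the while loop (|R_s| < t_r), node i receives the next message
  delivered from j (arbitrary interleaving between senders = arbitrary delivery delays).\<close>

definition cur_step :: "'m sys \<Rightarrow> nat \<Rightarrow> nat" where
  "cur_step \<sigma> i = length (Rs \<sigma> i)"

definition cur_set :: "'m sys \<Rightarrow> nat \<Rightarrow> (nat \<times> 'm) set" where
  "cur_set \<sigma> i = last (Rs \<sigma> i)"

definition process :: "nat \<Rightarrow> 'm msg \<Rightarrow> (nat \<times> 'm) set \<Rightarrow> (nat \<times> 'm) set" where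
  "process s msg cur =
     (if mstep msg = s then insert (msnd msg, mval msg) cur
      else if mstep msg > s then cur \<union> mset msg
      else cur)"

definition inv_enabled :: "nat \<Rightarrow> 'm sys \<Rightarrow> nat \<Rightarrow> bool" where
  "inv_enabled n \<sigma> i \<longleftrightarrow> i \<in> {1..n} \<and> \<not> crashed \<sigma> i \<and> \<not> busy \<sigma> i"

definition recv_enabled :: "nat \<Rightarrow> nat \<Rightarrow> 'm sys \<Rightarrow> nat \<Rightarrow> nat \<Rightarrow> bool" where
  "recv_enabled n tr \<sigma> i j \<longleftrightarrow> i \<in> {1..n} \<and> \<not> crashed \<sigma> i \<and> busy \<sigma> i
      \<and> card (cur_set \<sigma> i) < tr \<and> chan \<sigma> j i \<noteq> []"

definition ret_enabled :: "nat \<Rightarrow> nat \<Rightarrow> 'm sys \<Rightarrow> nat \<Rightarrow> bool" where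
  "ret_enabled n tr \<sigma> i \<longleftrightarrow> i \<in> {1..n} \<and> \<not> crashed \<sigma> i \<and> busy \<sigma> i
      \<and> tr \<le> card (cur_set \<sigma> i)"

fun trans :: "nat \<Rightarrow> nat \<Rightarrow> 'm sys \<Rightarrow> 'm act \<Rightarrow> 'm sys \<Rightarrow> bool" where
  "trans n tr \<sigma> (Invoke i m) \<sigma>' \<longleftrightarrow> inv_enabled n \<sigma> i \<and>
     (let R' = Rs \<sigma> i @ [{}]; s = length R'; msg = Msg i m s (R' ! (s - 2)) in
      \<sigma>' = \<sigma>\<lparr> Rs := (Rs \<sigma>)(i := R'),
              busy := (busy \<sigma>)(i := True),
              chan := (\<lambda>a b. if a = i \<and> b \<in> {1..n} then chan \<sigma> a b @ [msg] else chan \<sigma> a b),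
              sent := (sent \<sigma>)(i := (sent \<sigma> i)(s - 1 := Some m)) \<rparr>)"
| "trans n tr \<sigma> (Recv i j) \<sigma>' \<longleftrightarrow> recv_enabled n tr \<sigma> i j \<and>
     \<sigma>' = \<sigma>\<lparr> Rs := (Rs \<sigma>)(i := butlast (Rs \<sigma> i) @
                       [process (cur_step \<sigma> i) (hd (chan \<sigma> j i)) (cur_set \<sigma> i)]),
             chan := (chan \<sigma>)(j := (chan \<sigma> j)(i := tl (chan \<sigma> j i))) \<rparr>"
| "trans n tr \<sigma> (Return i) \<sigma>' \<longleftrightarrow> ret_enabled n tr \<sigma> i \<and>
     \<sigma>' = \<sigma>\<lparr> busy := (busy \<sigma>)(i := False),
             ret := (ret \<sigma>)(i := (ret \<sigma> i)(cur_step \<sigma> i - 1 := Some (snd ` cur_set \<sigma> i, {}))) \<rparr>"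
| "trans n tr \<sigma> (Crash i) \<sigma>' \<longleftrightarrow> i \<in> {1..n} \<and> \<not> crashed \<sigma> i \<and>
     \<sigma>' = \<sigma>\<lparr> crashed := (crashed \<sigma>)(i := True) \<rparr>"

text \<open>An execution: an infinite sequence of states with actions (None = stuttering, so
  arbitrary finite delays are allowed), starting in the initial state, with weak fairness:
  a message queued to a live node waiting in the receive loop is eventually received
  (eventual delivery; FIFO per channel by construction); a live node whose loop condition
  has become false eventually returns; every live idle node eventually makes its next
  TLCR call (each non-failed node calls the primitive once per logical time-step).\<close>

definition tlcr_exec :: "nat \<Rightarrow> nat \<Rightarrow> (nat \<Rightarrow> 'm sys) \<Rightarrow> (nat \<Rightarrow> 'm act option) \<Rightarrow> bool" where
  "tlcr_exec n tr \<sigma> act \<longleftrightarrow>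
     \<sigma> 0 = init_sys \<and>
     (\<forall>t. case act t of None \<Rightarrow> \<sigma> (Suc t) = \<sigma> t | Some a \<Rightarrow> trans n tr (\<sigma> t) a (\<sigma> (Suc t))) \<and>
     (\<forall>i j t0. \<exists>t\<ge>t0. \<not> recv_enabled n tr (\<sigma> t) i j \<or> act t = Some (Recv i j)) \<and>
     (\<forall>i t0. \<exists>t\<ge>t0. \<not> ret_enabled n tr (\<sigma> t) i \<or> act t = Some (Return i)) \<and>
     (\<forall>i t0. \<exists>t\<ge>t0. \<not> inv_enabled n (\<sigma> t) i \<or> (\<exists>m. act t = Some (Invoke i m)))"

definition fails :: "(nat \<Rightarrow> 'm sys) \<Rightarrow> nat \<Rightarrow> bool" where
  "fails \<sigma> i \<longleftrightarrow> (\<exists>t. crashed (\<sigma> t) i)"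

definition invoked :: "(nat \<Rightarrow> 'm sys) \<Rightarrow> nat \<Rightarrow> nat \<Rightarrow> bool" where
  "invoked \<sigma> i k \<longleftrightarrow> (\<exists>t. sent (\<sigma> t) i k \<noteq> None)"

definition bcast :: "(nat \<Rightarrow> 'm sys) \<Rightarrow> nat \<Rightarrow> nat \<Rightarrow> 'm \<Rightarrow> bool" where
  "bcast \<sigma> j k m \<longleftrightarrow> (\<exists>t. sent (\<sigma> t) j k = Some m)"

definition returned :: "(nat \<Rightarrow> 'm sys) \<Rightarrow> nat \<Rightarrow> nat \<Rightarrow> 'm set \<Rightarrow> 'm set \<Rightarrow> bool" where
  "returned \<sigma> i k R B \<longleftrightarrow> (\<exists>t. ret (\<sigma> t) i k = Some (R, B))"

definition TSB :: "nat \<Rightarrow> nat \<Rightarrow> nat \<Rightarrow> nat \<Rightarrow> (nat \<Rightarrow> nat \<Rightarrow> bool)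
    \<Rightarrow> (nat \<Rightarrow> nat \<Rightarrow> 'm \<Rightarrow> bool) \<Rightarrow> (nat \<Rightarrow> nat \<Rightarrow> 'm set \<Rightarrow> 'm set \<Rightarrow> bool)
    \<Rightarrow> (nat \<Rightarrow> bool) \<Rightarrow> bool" where
  "TSB n tr tb ts iv bc rt fl \<longleftrightarrow>
     \<comment> \<open>lock-step synchrony\<close>
     (\<forall>i\<in>{1..n}. \<forall>k. iv i k \<longrightarrow> fl i \<or> (\<exists>R B. rt i k R B)) \<and>
     \<comment> \<open>receive threshold\<close>
     (\<forall>i k R B. rt i k R B \<longrightarrow>
        (\<exists>N \<subseteq> {1..n}. tr \<le> card N \<and> (\<forall>j\<in>N. \<exists>m. bc j k m) \<and> R = {m. \<exists>j\<in>N. bc j k m})) \<and>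
     \<comment> \<open>broadcast threshold\<close>
     (\<forall>k. \<exists>N \<subseteq> {1..n}. tb \<le> card N \<and> (\<forall>j\<in>N. \<exists>m. bc j k m) \<and>
        (\<forall>i R B. rt i k R B \<longrightarrow> B = {m. \<exists>j\<in>N. bc j k m})) \<and>
     \<comment> \<open>spread threshold (failed nodes are counted, over-approximating the counterfactual)\<close>
     (\<forall>i k R B m. rt i k R B \<and> m \<in> B \<longrightarrow>
        ts \<le> card {j \<in> {1..n}. (\<exists>R' B'. rt j k R' B' \<and> m \<in> R') \<or> fl j})"

end

theory Submission
  imports Defs
begin

(* The messages node j has broadcast form a log whose entry for step k carries j's payload of
   step k together with its completed receive set of step k - 1.  Every FIFO channel from j to i
   holds a suffix of that log, and node i, while in step k, has consumed at most k + 1 of its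
   entries -- all k + 1 only if it has merged j's completed receive set of step k and so reached
   the threshold.  Together with the facts that receive sets contain only genuine broadcasts of
   their step and that completed steps contain at least t_r of them, this inductive invariant
   yields the receive threshold.

   Liveness is proved by induction on the step K.  If a correct node were blocked in step K for
   ever, no node could start step K + 1, since the blocked node would receive the corresponding
   log entry by fairness and so reach the threshold.  Hence every correct node blocks in step K.
   The first of them to enter step K had consumed fewer than K messages from each correct
   sender at that moment, so it later receives the step-K message of each of the at least
   n - f >= t_r correct nodes while still in step K, and its receive set reaches the threshold:
   a contradiction. *)

section \<open>Broadcast logs and the invariant\<close>

(* Entry k of the log is the broadcast of j's step k + 1: it is tagged Suc (Suc k), the length of
   Rs after the append, and carries Rs ! k.  Index 0 of Rs is the initial dummy set, so Rs ! k is
   the receive set of step k. *)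
definition bcast_log :: "'m sys \<Rightarrow> nat \<Rightarrow> 'm msg list" where
  "bcast_log \<sigma> j =
     map (\<lambda>k. Msg j (the (sent \<sigma> j (Suc k))) (Suc (Suc k)) (Rs \<sigma> j ! k)) [0..<length (Rs \<sigma> j) - 1]"

definition step_done :: "'m sys \<Rightarrow> nat \<Rightarrow> nat \<Rightarrow> bool" where
  "step_done \<sigma> j k \<longleftrightarrow> 1 \<le> k \<and> (Suc k < length (Rs \<sigma> j) \<or> Suc k = length (Rs \<sigma> j) \<and> \<not> busy \<sigma> j)"

definition consumed :: "'m sys \<Rightarrow> nat \<Rightarrow> nat \<Rightarrow> nat" where
  "consumed \<sigma> j i = length (bcast_log \<sigma> j) - length (chan \<sigma> j i)"

lemma step_done_less_length: "step_done \<sigma> j k \<Longrightarrow> k < length (Rs \<sigma> j)"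
  by (auto simp: step_done_def)

lemma consumed_le_length_bcast_log: "consumed \<sigma> j i \<le> length (bcast_log \<sigma> j)"
  by (simp add: consumed_def)

lemma length_bcast_log: "length (bcast_log \<sigma> j) = length (Rs \<sigma> j) - 1"
  by (simp add: bcast_log_def)

lemma nth_bcast_log:
  "k < length (bcast_log \<sigma> j) \<Longrightarrow>
     bcast_log \<sigma> j ! k = Msg j (the (sent \<sigma> j (Suc k))) (Suc (Suc k)) (Rs \<sigma> j ! k)"
  by (simp add: bcast_log_def)

lemma bcast_log_cong:
  assumes "length (Rs \<sigma>' j) = length (Rs \<sigma> j)" and "sent \<sigma>' j = sent \<sigma> j"
    and "\<And>k. Suc k < length (Rs \<sigma> j) \<Longrightarrow> Rs \<sigma>' j ! k = Rs \<sigma> j ! k"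
  shows "bcast_log \<sigma>' j = bcast_log \<sigma> j"
  using assms by (simp add: bcast_log_def)

lemma cur_set_conv_nth: "Rs \<sigma> i \<noteq> [] \<Longrightarrow> cur_set \<sigma> i = Rs \<sigma> i ! (length (Rs \<sigma> i) - 1)"
  by (simp add: cur_set_def last_conv_nth)

definition steps_nonempty :: "'m sys \<Rightarrow> bool" where
  "steps_nonempty \<sigma> \<longleftrightarrow> (\<forall>j. Rs \<sigma> j \<noteq> [])"

definition outsiders_idle :: "nat \<Rightarrow> 'm sys \<Rightarrow> bool" where
  "outsiders_idle n \<sigma> \<longleftrightarrow> (\<forall>j. j \<notin> {1..n} \<longrightarrow> length (Rs \<sigma> j) = 1)"

definition sent_iff_started :: "'m sys \<Rightarrow> bool" where
  "sent_iff_started \<sigma> \<longleftrightarrow> (\<forall>j k. sent \<sigma> j k \<noteq> None \<longleftrightarrow> 1 \<le> k \<and> k < length (Rs \<sigma> j))"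

definition recv_sets_genuine :: "nat \<Rightarrow> 'm sys \<Rightarrow> bool" where
  "recv_sets_genuine n \<sigma> \<longleftrightarrow> (\<forall>i k x. k < length (Rs \<sigma> i) \<longrightarrow> x \<in> Rs \<sigma> i ! k \<longrightarrow>
     fst x \<in> {1..n} \<and> sent \<sigma> (fst x) k = Some (snd x))"

definition done_sets_full :: "nat \<Rightarrow> 'm sys \<Rightarrow> bool" where
  "done_sets_full tr \<sigma> \<longleftrightarrow> (\<forall>j k. step_done \<sigma> j k \<longrightarrow> tr \<le> card (Rs \<sigma> j ! k))"

definition busy_started :: "'m sys \<Rightarrow> bool" where
  "busy_started \<sigma> \<longleftrightarrow> (\<forall>j. busy \<sigma> j \<longrightarrow> 2 \<le> length (Rs \<sigma> j))"

(* The last conjunct holds because a node in step k that has consumed j's broadcast of step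
   k + 1 has merged j's completed receive set of step k. *)
definition chan_unconsumed :: "nat \<Rightarrow> nat \<Rightarrow> 'm sys \<Rightarrow> bool" where
  "chan_unconsumed n tr \<sigma> \<longleftrightarrow> (\<forall>i\<in>{1..n}. \<forall>j.
     chan \<sigma> j i = drop (consumed \<sigma> j i) (bcast_log \<sigma> j) \<and> consumed \<sigma> j i \<le> length (Rs \<sigma> i) \<and>
     (consumed \<sigma> j i = length (Rs \<sigma> i) \<longrightarrow> busy \<sigma> i \<longrightarrow> tr \<le> card (cur_set \<sigma> i)))"

definition ret_iff_done :: "'m sys \<Rightarrow> bool" where
  "ret_iff_done \<sigma> \<longleftrightarrow> (\<forall>i k. ret \<sigma> i k \<noteq> None \<longleftrightarrow> step_done \<sigma> i k)"

definition ret_recv_set :: "'m sys \<Rightarrow> bool" where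
  "ret_recv_set \<sigma> \<longleftrightarrow> (\<forall>i k R B. ret \<sigma> i k = Some (R, B) \<longrightarrow> R = snd ` (Rs \<sigma> i ! k) \<and> B = {})"

definition tlcr_inv :: "nat \<Rightarrow> nat \<Rightarrow> 'm sys \<Rightarrow> bool" where
  "tlcr_inv n tr \<sigma> \<longleftrightarrow> steps_nonempty \<sigma> \<and> outsiders_idle n \<sigma> \<and> sent_iff_started \<sigma> \<and>
     recv_sets_genuine n \<sigma> \<and> done_sets_full tr \<sigma> \<and> busy_started \<sigma> \<and> chan_unconsumed n tr \<sigma> \<and>
     ret_iff_done \<sigma> \<and> ret_recv_set \<sigma>"

lemmas tlcr_inv_defs = tlcr_inv_def steps_nonempty_def outsiders_idle_def sent_iff_started_def
  recv_sets_genuine_def done_sets_full_def busy_started_def chan_unconsumed_def ret_iff_done_def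
  ret_recv_set_def

lemma finite_genuine_set:
  fixes S :: "(nat \<times> 'm) set"
  assumes "\<And>x. x \<in> S \<Longrightarrow> fst x \<in> {1..n} \<and> f (fst x) = Some (snd x)"
  shows "finite S"
proof (rule finite_subset)
  show "S \<subseteq> (\<lambda>j. (j, the (f j))) ` {1..n}"
    using assms by (auto simp: image_iff)
qed simp

context
  fixes n tr :: nat and \<sigma> :: "'m sys"
  assumes I: "tlcr_inv n tr \<sigma>"
begin

lemma inv_Rs_nonempty: "Rs \<sigma> j \<noteq> []"
  using I unfolding tlcr_inv_defs by blast

lemma inv_outsider_idle: "j \<notin> {1..n} \<Longrightarrow> length (Rs \<sigma> j) = 1"
  using I unfolding tlcr_inv_defs by blast

lemma inv_sent_iff: "sent \<sigma> j k \<noteq> None \<longleftrightarrow> 1 \<le> k \<and> k < length (Rs \<sigma> j)"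
  using I unfolding tlcr_inv_defs by blast

lemma inv_recv_genuine:
  "k < length (Rs \<sigma> i) \<Longrightarrow> x \<in> Rs \<sigma> i ! k \<Longrightarrow> fst x \<in> {1..n} \<and> sent \<sigma> (fst x) k = Some (snd x)"
  using I unfolding tlcr_inv_defs by blast

lemma inv_done_full: "step_done \<sigma> j k \<Longrightarrow> tr \<le> card (Rs \<sigma> j ! k)"
  using I unfolding tlcr_inv_defs by blast

lemma inv_busy_started: "busy \<sigma> j \<Longrightarrow> 2 \<le> length (Rs \<sigma> j)"
  using I unfolding tlcr_inv_defs by blast

lemma inv_chan:
  assumes "i \<in> {1..n}"
  shows "chan \<sigma> j i = drop (consumed \<sigma> j i) (bcast_log \<sigma> j)"
    and "consumed \<sigma> j i \<le> length (Rs \<sigma> i)"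
    and "consumed \<sigma> j i = length (Rs \<sigma> i) \<Longrightarrow> busy \<sigma> i \<Longrightarrow> tr \<le> card (cur_set \<sigma> i)"
  using I assms unfolding tlcr_inv_def chan_unconsumed_def by blast+

lemma inv_ret_iff_done: "ret \<sigma> i k \<noteq> None \<longleftrightarrow> step_done \<sigma> i k"
  using I unfolding tlcr_inv_defs by blast

lemma inv_ret_recv_set: "ret \<sigma> i k = Some (R, B) \<Longrightarrow> R = snd ` (Rs \<sigma> i ! k) \<and> B = {}"
  using I unfolding tlcr_inv_defs by blast

lemma inv_finite_recv_set:
  assumes "k < length (Rs \<sigma> i)"
  shows "finite (Rs \<sigma> i ! k)"
  using inv_recv_genuine[OF assms] by (rule finite_genuine_set)

lemma inv_finite_cur_set: "finite (cur_set \<sigma> i)"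
  using inv_finite_recv_set[of "length (Rs \<sigma> i) - 1" i] inv_Rs_nonempty[of i]
  by (simp add: cur_set_conv_nth)

end

lemma tlcr_invI:
  assumes "\<And>j. Rs \<sigma> j \<noteq> []"
    and "\<And>j. j \<notin> {1..n} \<Longrightarrow> length (Rs \<sigma> j) = 1"
    and "\<And>j k. sent \<sigma> j k \<noteq> None \<longleftrightarrow> 1 \<le> k \<and> k < length (Rs \<sigma> j)"
    and "\<And>i k x. k < length (Rs \<sigma> i) \<Longrightarrow> x \<in> Rs \<sigma> i ! k \<Longrightarrow>
           fst x \<in> {1..n} \<and> sent \<sigma> (fst x) k = Some (snd x)"
    and "\<And>j k. step_done \<sigma> j k \<Longrightarrow> tr \<le> card (Rs \<sigma> j ! k)"
    and "\<And>j. busy \<sigma> j \<Longrightarrow> 2 \<le> length (Rs \<sigma> j)"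
    and "\<And>i j. i \<in> {1..n} \<Longrightarrow> chan \<sigma> j i = drop (consumed \<sigma> j i) (bcast_log \<sigma> j)"
    and "\<And>i j. i \<in> {1..n} \<Longrightarrow> consumed \<sigma> j i \<le> length (Rs \<sigma> i)"
    and "\<And>i j. i \<in> {1..n} \<Longrightarrow> consumed \<sigma> j i = length (Rs \<sigma> i) \<Longrightarrow> busy \<sigma> i \<Longrightarrow>
           tr \<le> card (cur_set \<sigma> i)"
    and "\<And>i k. ret \<sigma> i k \<noteq> None \<longleftrightarrow> step_done \<sigma> i k"
    and "\<And>i k R B. ret \<sigma> i k = Some (R, B) \<Longrightarrow> R = snd ` (Rs \<sigma> i ! k) \<and> B = {}"
  shows "tlcr_inv n tr \<sigma>"
  unfolding tlcr_inv_defs using assms by blast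

lemma tlcr_inv_init: "tlcr_inv n tr init_sys"
  by (simp add: tlcr_inv_defs init_sys_def bcast_log_def step_done_def consumed_def)

section \<open>The invariant is inductive\<close>

lemma trans_InvokeD:
  assumes "trans n tr \<sigma> (Invoke i m) \<sigma>'" and "Rs \<sigma> i \<noteq> []"
  shows "inv_enabled n \<sigma> i"
    and "Rs \<sigma>' = (Rs \<sigma>)(i := Rs \<sigma> i @ [{}])"
    and "busy \<sigma>' = (busy \<sigma>)(i := True)"
    and "ret \<sigma>' = ret \<sigma>"
    and "sent \<sigma>' = (sent \<sigma>)(i := (sent \<sigma> i)(length (Rs \<sigma> i) := Some m))"
    and "chan \<sigma>' = (\<lambda>a b. if a = i \<and> b \<in> {1..n}
           then chan \<sigma> a b @ [Msg i m (Suc (length (Rs \<sigma> i))) (cur_set \<sigma> i)] else chan \<sigma> a b)"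
proof -
  have msg: "Msg i m (length (Rs \<sigma> i @ [{}])) ((Rs \<sigma> i @ [{}]) ! (length (Rs \<sigma> i @ [{}]) - 2))
      = Msg i m (Suc (length (Rs \<sigma> i))) (cur_set \<sigma> i)"
    using assms(2) by (simp add: cur_set_conv_nth nth_append)
  show "chan \<sigma>' = (\<lambda>a b. if a = i \<and> b \<in> {1..n}
           then chan \<sigma> a b @ [Msg i m (Suc (length (Rs \<sigma> i))) (cur_set \<sigma> i)] else chan \<sigma> a b)"
    using assms(1) unfolding trans.simps Let_def msg by simp
qed (use assms(1) in \<open>simp_all add: Let_def\<close>)

lemma trans_RecvD:
  assumes "trans n tr \<sigma> (Recv i j) \<sigma>'"
  shows "recv_enabled n tr \<sigma> i j"
    and "Rs \<sigma>' = (Rs \<sigma>)(i := butlast (Rs \<sigma> i) @ [process (cur_step \<sigma> i) (hd (chan \<sigma> j i)) (cur_set \<sigma> i)])"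
    and "busy \<sigma>' = busy \<sigma>" and "ret \<sigma>' = ret \<sigma>" and "sent \<sigma>' = sent \<sigma>"
    and "chan \<sigma>' = (chan \<sigma>)(j := (chan \<sigma> j)(i := tl (chan \<sigma> j i)))"
  using assms by simp_all

lemma trans_ReturnD:
  assumes "trans n tr \<sigma> (Return i) \<sigma>'"
  shows "ret_enabled n tr \<sigma> i"
    and "Rs \<sigma>' = Rs \<sigma>" and "busy \<sigma>' = (busy \<sigma>)(i := False)"
    and "sent \<sigma>' = sent \<sigma>" and "chan \<sigma>' = chan \<sigma>"
    and "ret \<sigma>' = (ret \<sigma>)(i := (ret \<sigma> i)(cur_step \<sigma> i - 1 := Some (snd ` cur_set \<sigma> i, {})))"
  using assms by simp_all

lemma trans_CrashD:
  assumes "trans n tr \<sigma> (Crash i) \<sigma>'"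
  shows "Rs \<sigma>' = Rs \<sigma>" and "busy \<sigma>' = busy \<sigma>" and "sent \<sigma>' = sent \<sigma>"
    and "chan \<sigma>' = chan \<sigma>" and "ret \<sigma>' = ret \<sigma>"
  using assms by simp_all

context
  fixes n tr :: nat and \<sigma> \<sigma>' :: "'m sys" and i :: nat and m :: 'm
  assumes I: "tlcr_inv n tr \<sigma>" and t: "trans n tr \<sigma> (Invoke i m) \<sigma>'"
begin

lemmas Invoke_fields = trans_InvokeD[OF t inv_Rs_nonempty[OF I]]

lemma Rs_Invoke:
  shows "length (Rs \<sigma>' x) = (if x = i then Suc (length (Rs \<sigma> i)) else length (Rs \<sigma> x))"
    and "k < length (Rs \<sigma> x) \<Longrightarrow> Rs \<sigma>' x ! k = Rs \<sigma> x ! k"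
    and "Rs \<sigma>' i ! length (Rs \<sigma> i) = {}"
  using Invoke_fields(2) by (auto simp: nth_append)

lemma sent_Invoke: "sent \<sigma> x k = Some v \<Longrightarrow> sent \<sigma>' x k = Some v"
  using Invoke_fields(5) inv_sent_iff[OF I, of i "length (Rs \<sigma> i)"]
  by auto

lemma step_done_Invoke: "step_done \<sigma>' x k \<longleftrightarrow> step_done \<sigma> x k"
  using Rs_Invoke(1) Invoke_fields(1,3)
  by (auto simp: step_done_def inv_enabled_def)

lemma bcast_log_Invoke:
  "bcast_log \<sigma>' j =
     (if j = i then bcast_log \<sigma> i @ [Msg i m (Suc (length (Rs \<sigma> i))) (cur_set \<sigma> i)] else bcast_log \<sigma> j)"
proof (cases "j = i")
  case True
  have ne: "Rs \<sigma> i \<noteq> []" by (rule inv_Rs_nonempty[OF I])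
  then obtain L where L: "length (Rs \<sigma> i) = Suc L" by (cases "Rs \<sigma> i") auto
  show ?thesis
  proof (rule nth_equalityI)
    fix k assume "k < length (bcast_log \<sigma>' j)"
    then show "bcast_log \<sigma>' j ! k = (if j = i then bcast_log \<sigma> i @ [Msg i m (Suc (length (Rs \<sigma> i))) (cur_set \<sigma> i)]
                           else bcast_log \<sigma> j) ! k"
      using True Invoke_fields(2,5) ne L
      by (cases "k = L") (auto simp: nth_bcast_log length_bcast_log nth_append cur_set_conv_nth)
  qed (use True Rs_Invoke(1) L in \<open>simp add: length_bcast_log\<close>)
next
  case False
  then show ?thesis using Invoke_fields(2,5) by (simp add: bcast_log_def)
qed

lemma consumed_Invoke: "b \<in> {1..n} \<Longrightarrow> consumed \<sigma>' j b = consumed \<sigma> j b"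
  using bcast_log_Invoke[of j] Invoke_fields(6) by (simp add: consumed_def)

lemma tlcr_inv_Invoke: "tlcr_inv n tr \<sigma>'"
proof -
  have i: "i \<in> {1..n}" using Invoke_fields(1) by (simp add: inv_enabled_def)
  note busy' = Invoke_fields(3) and ret' = Invoke_fields(4) and sent' = Invoke_fields(5)
  have step_done_Rs: "Rs \<sigma>' x ! k = Rs \<sigma> x ! k" if "step_done \<sigma> x k" for x k
    using that Rs_Invoke(2) by (simp add: step_done_less_length)
  show ?thesis
  proof (rule tlcr_invI)
    show "Rs \<sigma>' x \<noteq> []" for x using Rs_Invoke(1) inv_Rs_nonempty[OF I] by (metis length_0_conv nat.distinct(1))
    show "x \<notin> {1..n} \<Longrightarrow> length (Rs \<sigma>' x) = 1" for x using Rs_Invoke(1) i inv_outsider_idle[OF I] by auto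
    show "sent \<sigma>' x k \<noteq> None \<longleftrightarrow> 1 \<le> k \<and> k < length (Rs \<sigma>' x)" for x k
      using inv_sent_iff[OF I, of x k] sent' Rs_Invoke(1) inv_Rs_nonempty[OF I, of i]
      by (auto simp: Suc_le_eq)
    show "fst x \<in> {1..n} \<and> sent \<sigma>' (fst x) k = Some (snd x)"
      if "k < length (Rs \<sigma>' y)" and "x \<in> Rs \<sigma>' y ! k" for x y k
    proof -
      have "k < length (Rs \<sigma> y)"
        using that Rs_Invoke(1,3) by (cases "y = i \<and> k = length (Rs \<sigma> i)") (auto split: if_splits)
      then show ?thesis using that(2) Rs_Invoke(2) inv_recv_genuine[OF I] sent_Invoke by metis
    qed
    show "step_done \<sigma>' x k \<Longrightarrow> tr \<le> card (Rs \<sigma>' x ! k)" for x k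
      using step_done_Invoke step_done_Rs inv_done_full[OF I] by simp
    show "busy \<sigma>' x \<Longrightarrow> 2 \<le> length (Rs \<sigma>' x)" for x
      using busy' Rs_Invoke(1) inv_Rs_nonempty[OF I, of i] inv_busy_started[OF I]
      by (auto simp: Suc_le_eq split: if_splits)
    show "chan \<sigma>' y b = drop (consumed \<sigma>' y b) (bcast_log \<sigma>' y)" if "b \<in> {1..n}" for y b
      using inv_chan(1)[OF I that, of y] consumed_Invoke[OF that] bcast_log_Invoke
        Invoke_fields(6) that
      by (auto simp: consumed_def)
    show "consumed \<sigma>' y b \<le> length (Rs \<sigma>' b)" if "b \<in> {1..n}" for y b
      using inv_chan(2)[OF I that, of y] consumed_Invoke[OF that] Rs_Invoke(1)[of b] by auto
    show "tr \<le> card (cur_set \<sigma>' b)"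
      if "b \<in> {1..n}" and "consumed \<sigma>' y b = length (Rs \<sigma>' b)" and "busy \<sigma>' b" for y b
      using that inv_chan(2,3)[OF I that(1), of y] consumed_Invoke[OF that(1)] Rs_Invoke(1)[of b]
        Invoke_fields(2) busy'
      by (auto simp: cur_set_def split: if_splits)
    show "ret \<sigma>' x k \<noteq> None \<longleftrightarrow> step_done \<sigma>' x k" for x k
      using ret' step_done_Invoke inv_ret_iff_done[OF I] by simp
    show "ret \<sigma>' x k = Some (R, B) \<Longrightarrow> R = snd ` (Rs \<sigma>' x ! k) \<and> B = {}" for x k R B
      using ret' inv_ret_recv_set[OF I] inv_ret_iff_done[OF I] step_done_Rs
      by (metis option.distinct(1))
  qed
qed

end

context
  fixes n tr :: nat and \<sigma> :: "'m sys" and i j :: nat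
  assumes I: "tlcr_inv n tr \<sigma>" and en: "recv_enabled n tr \<sigma> i j"
begin

lemma recv_consumed_less_length: "Suc (consumed \<sigma> j i) \<le> length (Rs \<sigma> i)"
proof -
  have "i \<in> {1..n}" "busy \<sigma> i" "card (cur_set \<sigma> i) < tr" using en by (auto simp: recv_enabled_def)
  then show ?thesis using inv_chan(2,3)[OF I, of i j] by fastforce
qed

lemma recv_head:
  shows "consumed \<sigma> j i < length (bcast_log \<sigma> j)"
    and "hd (chan \<sigma> j i) = bcast_log \<sigma> j ! consumed \<sigma> j i"
proof -
  have i: "i \<in> {1..n}" and ne: "chan \<sigma> j i \<noteq> []" using en by (auto simp: recv_enabled_def)
  have ch: "chan \<sigma> j i = drop (consumed \<sigma> j i) (bcast_log \<sigma> j)" by (rule inv_chan(1)[OF I i])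
  with ne show lt: "consumed \<sigma> j i < length (bcast_log \<sigma> j)" by (simp add: not_le[symmetric])
  with ch show "hd (chan \<sigma> j i) = bcast_log \<sigma> j ! consumed \<sigma> j i" by (simp add: hd_drop_conv_nth)
qed

lemma process_head:
  defines "c \<equiv> consumed \<sigma> j i" and "L \<equiv> length (Rs \<sigma> i)"
  shows "process (cur_step \<sigma> i) (hd (chan \<sigma> j i)) (cur_set \<sigma> i) =
    (if Suc (Suc c) = L then insert (j, the (sent \<sigma> j (Suc c))) (cur_set \<sigma> i)
     else if Suc c = L then cur_set \<sigma> i \<union> Rs \<sigma> j ! c
     else cur_set \<sigma> i)"
  using recv_head recv_consumed_less_length
  by (auto simp: process_def nth_bcast_log cur_step_def c_def L_def)

lemma process_head_genuine:
  assumes "x \<in> process (cur_step \<sigma> i) (hd (chan \<sigma> j i)) (cur_set \<sigma> i)"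
  shows "fst x \<in> {1..n} \<and> sent \<sigma> (fst x) (length (Rs \<sigma> i) - 1) = Some (snd x)"
proof -
  define c where "c = consumed \<sigma> j i"
  define L where "L = length (Rs \<sigma> i)"
  have L2: "2 \<le> L" using inv_busy_started[OF I] en by (simp add: recv_enabled_def L_def)
  have c_lt: "Suc c < length (Rs \<sigma> j)" using recv_head(1) by (simp add: length_bcast_log c_def)
  have j: "j \<in> {1..n}" using inv_outsider_idle[OF I, of j] c_lt by fastforce
  have cur: "fst y \<in> {1..n} \<and> sent \<sigma> (fst y) (L - 1) = Some (snd y)" if "y \<in> cur_set \<sigma> i" for y
    using that inv_recv_genuine[OF I, of "L - 1" i] inv_Rs_nonempty[OF I, of i] L2
    by (simp add: cur_set_conv_nth L_def)
  consider "Suc (Suc c) = L" "x = (j, the (sent \<sigma> j (Suc c)))"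
    | "Suc c = L" "x \<in> Rs \<sigma> j ! c"
    | "x \<in> cur_set \<sigma> i"
    using assms process_head by (auto simp: c_def L_def split: if_splits)
  then show ?thesis
  proof cases
    case 1
    then have "length (Rs \<sigma> i) - 1 = Suc c" by (simp add: L_def)
    then show ?thesis using 1 j inv_sent_iff[OF I, of j "Suc c"] c_lt by auto
  next
    case 2
    then have "length (Rs \<sigma> i) - 1 = c" by (simp add: L_def)
    then show ?thesis using 2 inv_recv_genuine[OF I, of c j x] c_lt by simp
  qed (use cur in \<open>simp add: L_def\<close>)
qed

lemma process_head_full:
  assumes "Suc (consumed \<sigma> j i) = length (Rs \<sigma> i)"
  shows "tr \<le> card (process (cur_step \<sigma> i) (hd (chan \<sigma> j i)) (cur_set \<sigma> i))"
proof -
  define c where "c = consumed \<sigma> j i"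
  have "2 \<le> length (Rs \<sigma> i)" using inv_busy_started[OF I] en by (simp add: recv_enabled_def)
  moreover have "Suc c < length (Rs \<sigma> j)" using recv_head(1) by (simp add: length_bcast_log c_def)
  ultimately have "step_done \<sigma> j c" using assms by (simp add: step_done_def c_def)
  then have "tr \<le> card (Rs \<sigma> j ! c)" by (rule inv_done_full[OF I])
  also have "\<dots> \<le> card (process (cur_step \<sigma> i) (hd (chan \<sigma> j i)) (cur_set \<sigma> i))"
  proof (rule card_mono)
    show "finite (process (cur_step \<sigma> i) (hd (chan \<sigma> j i)) (cur_set \<sigma> i))"
      using process_head_genuine by (rule finite_genuine_set)
    show "Rs \<sigma> j ! c \<subseteq> process (cur_step \<sigma> i) (hd (chan \<sigma> j i)) (cur_set \<sigma> i)"
      using process_head assms by (simp add: c_def)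
  qed
  finally show ?thesis .
qed

end

context
  fixes n tr :: nat and \<sigma> \<sigma>' :: "'m sys" and i j :: nat
  assumes I: "tlcr_inv n tr \<sigma>" and t: "trans n tr \<sigma> (Recv i j) \<sigma>'"
begin

lemma Rs_Recv:
  shows "length (Rs \<sigma>' x) = length (Rs \<sigma> x)"
    and "Suc k < length (Rs \<sigma> x) \<Longrightarrow> Rs \<sigma>' x ! k = Rs \<sigma> x ! k"
    and "cur_set \<sigma>' x =
           (if x = i then process (cur_step \<sigma> i) (hd (chan \<sigma> j i)) (cur_set \<sigma> i) else cur_set \<sigma> x)"
    and "x \<noteq> i \<Longrightarrow> Rs \<sigma>' x = Rs \<sigma> x"
  using trans_RecvD(2)[OF t] inv_Rs_nonempty[OF I, of i]
  by (auto simp: nth_append nth_butlast cur_set_def)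

lemma bcast_log_Recv: "bcast_log \<sigma>' x = bcast_log \<sigma> x"
  by (rule bcast_log_cong[OF Rs_Recv(1) _ Rs_Recv(2)]) (simp_all add: trans_RecvD(5)[OF t])

lemma consumed_Recv: "consumed \<sigma>' y b = consumed \<sigma> y b + (if y = j \<and> b = i then 1 else 0)"
proof -
  have en: "recv_enabled n tr \<sigma> i j" by (rule trans_RecvD(1)[OF t])
  have "chan \<sigma> j i \<noteq> []" using en by (simp add: recv_enabled_def)
  moreover have "length (chan \<sigma> j i) \<le> length (bcast_log \<sigma> j)"
    using recv_head(1)[OF I en] inv_chan(1)[OF I, of i j] en by (simp add: recv_enabled_def)
  ultimately show ?thesis
    using trans_RecvD(6)[OF t] bcast_log_Recv
    by (cases "chan \<sigma> j i") (auto simp: consumed_def Suc_diff_Suc)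
qed

lemma step_done_Recv: "step_done \<sigma>' x k \<longleftrightarrow> step_done \<sigma> x k"
  using Rs_Recv(1) trans_RecvD(3)[OF t] by (simp add: step_done_def)

lemma step_done_Rs_Recv: "step_done \<sigma> x k \<Longrightarrow> Rs \<sigma>' x ! k = Rs \<sigma> x ! k"
  using trans_RecvD(1)[OF t] Rs_Recv(2,4) by (cases "x = i") (auto simp: step_done_def recv_enabled_def)

lemma recv_genuine_Recv:
  assumes k: "k < length (Rs \<sigma>' y)" and x: "x \<in> Rs \<sigma>' y ! k"
  shows "fst x \<in> {1..n} \<and> sent \<sigma>' (fst x) k = Some (snd x)"
proof (cases "y = i \<and> k = length (Rs \<sigma> i) - 1")
  case True
  moreover have "Rs \<sigma>' i \<noteq> []" using Rs_Recv(1)[of i] inv_Rs_nonempty[OF I, of i] by auto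
  ultimately have "x \<in> cur_set \<sigma>' i" using x Rs_Recv(1)[of i] by (simp add: cur_set_conv_nth)
  then show ?thesis
    using True Rs_Recv(3) process_head_genuine[OF I trans_RecvD(1)[OF t]] trans_RecvD(5)[OF t] by simp
next
  case False
  then have "Suc k < length (Rs \<sigma> y) \<or> y \<noteq> i" using k Rs_Recv(1) by auto
  then have "x \<in> Rs \<sigma> y ! k" using x Rs_Recv(2,4) by auto
  then show ?thesis using inv_recv_genuine[OF I] k Rs_Recv(1) trans_RecvD(5)[OF t] by simp
qed

lemma cur_set_Recv_mono: "cur_set \<sigma> x \<subseteq> cur_set \<sigma>' x"
  using Rs_Recv(3) by (auto simp: process_def)

lemma finite_cur_set_Recv: "finite (cur_set \<sigma>' x)"
proof -
  have ne: "Rs \<sigma>' x \<noteq> []" using Rs_Recv(1)[of x] inv_Rs_nonempty[OF I, of x] by (metis length_0_conv)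
  then have "length (Rs \<sigma>' x) - 1 < length (Rs \<sigma>' x)" by simp
  from recv_genuine_Recv[OF this] have "finite (Rs \<sigma>' x ! (length (Rs \<sigma>' x) - 1))"
    by (rule finite_genuine_set)
  then show ?thesis by (simp add: cur_set_conv_nth[OF ne])
qed

lemma tlcr_inv_Recv: "tlcr_inv n tr \<sigma>'"
proof -
  have en: "recv_enabled n tr \<sigma> i j" by (rule trans_RecvD(1)[OF t])
  note busy' = trans_RecvD(3)[OF t] and ret' = trans_RecvD(4)[OF t] and sent' = trans_RecvD(5)[OF t]
  show ?thesis
  proof (rule tlcr_invI)
    show "Rs \<sigma>' x \<noteq> []" for x using Rs_Recv(1) inv_Rs_nonempty[OF I] by (metis length_0_conv)
    show "x \<notin> {1..n} \<Longrightarrow> length (Rs \<sigma>' x) = 1" for x using Rs_Recv(1) inv_outsider_idle[OF I] by simp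
    show "sent \<sigma>' x k \<noteq> None \<longleftrightarrow> 1 \<le> k \<and> k < length (Rs \<sigma>' x)" for x k
      using Rs_Recv(1) sent' inv_sent_iff[OF I] by simp
    show "step_done \<sigma>' x k \<Longrightarrow> tr \<le> card (Rs \<sigma>' x ! k)" for x k
      using step_done_Recv step_done_Rs_Recv inv_done_full[OF I] by simp
    show "busy \<sigma>' x \<Longrightarrow> 2 \<le> length (Rs \<sigma>' x)" for x
      using busy' Rs_Recv(1) inv_busy_started[OF I] by simp
    show "chan \<sigma>' y b = drop (consumed \<sigma>' y b) (bcast_log \<sigma>' y)" if "b \<in> {1..n}" for y b
      using inv_chan(1)[OF I that, of y] consumed_Recv bcast_log_Recv trans_RecvD(6)[OF t]
      by (auto simp: drop_Suc tl_drop)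
    show "consumed \<sigma>' y b \<le> length (Rs \<sigma>' b)" if "b \<in> {1..n}" for y b
      using inv_chan(2)[OF I that, of y] consumed_Recv Rs_Recv(1) recv_consumed_less_length[OF I en] by auto
    show "tr \<le> card (cur_set \<sigma>' b)"
      if "b \<in> {1..n}" and "consumed \<sigma>' y b = length (Rs \<sigma>' b)" and "busy \<sigma>' b" for y b
    proof (cases "y = j \<and> b = i")
      case True
      then show ?thesis using that(2) consumed_Recv Rs_Recv(1,3) process_head_full[OF I en] by simp
    next
      case False
      then have "tr \<le> card (cur_set \<sigma> b)"
        using that inv_chan(3)[OF I that(1), of y] consumed_Recv Rs_Recv(1) busy' by auto
      also have "\<dots> \<le> card (cur_set \<sigma>' b)"
        using cur_set_Recv_mono finite_cur_set_Recv by (rule card_mono[rotated])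
      finally show ?thesis .
    qed
    show "ret \<sigma>' x k \<noteq> None \<longleftrightarrow> step_done \<sigma>' x k" for x k
      using ret' step_done_Recv inv_ret_iff_done[OF I] by simp
    show "ret \<sigma>' x k = Some (R, B) \<Longrightarrow> R = snd ` (Rs \<sigma>' x ! k) \<and> B = {}" for x k R B
      using ret' inv_ret_recv_set[OF I] inv_ret_iff_done[OF I] step_done_Rs_Recv
      by (metis option.distinct(1))
  qed (rule recv_genuine_Recv)
qed

end

lemma tlcr_inv_Return:
  assumes I: "tlcr_inv n tr \<sigma>" and t: "trans n tr \<sigma> (Return i) \<sigma>'"
  shows "tlcr_inv n tr \<sigma>'"
proof -
  define L where "L = length (Rs \<sigma> i)"
  have busy_i: "busy \<sigma> i" and full: "tr \<le> card (cur_set \<sigma> i)"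
    using trans_ReturnD(1)[OF t] by (auto simp: ret_enabled_def)
  have L2: "2 \<le> L" using inv_busy_started[OF I busy_i] by (simp add: L_def)
  have cur: "cur_set \<sigma> i = Rs \<sigma> i ! (L - 1)"
    using cur_set_conv_nth[OF inv_Rs_nonempty[OF I]] by (simp add: L_def)
  note Rs' = trans_ReturnD(2)[OF t] and busy' = trans_ReturnD(3)[OF t]
    and sent' = trans_ReturnD(4)[OF t] and chan' = trans_ReturnD(5)[OF t]
  have ret': "ret \<sigma>' x k = (if x = i \<and> k = L - 1 then Some (snd ` cur_set \<sigma> i, {}) else ret \<sigma> x k)" for x k
    using trans_ReturnD(6)[OF t] by (simp add: cur_step_def L_def)
  have done': "step_done \<sigma>' x k \<longleftrightarrow> step_done \<sigma> x k \<or> (x = i \<and> k = L - 1)" for x k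
    using Rs' busy' busy_i L2 by (auto simp: step_done_def L_def)
  show ?thesis
  proof (rule tlcr_invI)
    show "sent \<sigma>' x k \<noteq> None \<longleftrightarrow> 1 \<le> k \<and> k < length (Rs \<sigma>' x)" for x k
      using Rs' sent' inv_sent_iff[OF I] by simp
    show "step_done \<sigma>' x k \<Longrightarrow> tr \<le> card (Rs \<sigma>' x ! k)" for x k
      using done' Rs' inv_done_full[OF I] full cur by auto
    show "chan \<sigma>' y b = drop (consumed \<sigma>' y b) (bcast_log \<sigma>' y)" if "b \<in> {1..n}" for y b
      using inv_chan(1)[OF I that] Rs' sent' chan' by (simp add: consumed_def bcast_log_def)
    show "consumed \<sigma>' y b \<le> length (Rs \<sigma>' b)" if "b \<in> {1..n}" for y b
      using inv_chan(2)[OF I that] Rs' sent' chan' by (simp add: consumed_def bcast_log_def)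
    show "tr \<le> card (cur_set \<sigma>' b)"
      if "b \<in> {1..n}" and "consumed \<sigma>' y b = length (Rs \<sigma>' b)" and "busy \<sigma>' b" for y b
      using that inv_chan(3)[OF I that(1)] Rs' sent' chan' busy'
      by (simp add: consumed_def bcast_log_def cur_set_def split: if_splits)
    show "ret \<sigma>' x k \<noteq> None \<longleftrightarrow> step_done \<sigma>' x k" for x k
      using ret' done' inv_ret_iff_done[OF I] by auto
    show "ret \<sigma>' x k = Some (R, B) \<Longrightarrow> R = snd ` (Rs \<sigma>' x ! k) \<and> B = {}" for x k R B
      using ret' Rs' cur inv_ret_recv_set[OF I] by (auto split: if_splits)
  qed (use Rs' busy' inv_Rs_nonempty[OF I] inv_outsider_idle[OF I] inv_recv_genuine[OF I]
      inv_busy_started[OF I] sent' in \<open>auto split: if_splits\<close>)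
qed

lemma tlcr_inv_Crash:
  assumes I: "tlcr_inv n tr \<sigma>" and t: "trans n tr \<sigma> (Crash i) \<sigma>'"
  shows "tlcr_inv n tr \<sigma>'"
proof -
  have eqs: "bcast_log \<sigma>' = bcast_log \<sigma>" "step_done \<sigma>' = step_done \<sigma>" "consumed \<sigma>' = consumed \<sigma>"
    "cur_set \<sigma>' = cur_set \<sigma>"
    using trans_CrashD[OF t] by (simp_all add: fun_eq_iff bcast_log_def step_done_def consumed_def cur_set_def)
  show ?thesis
    using I unfolding tlcr_inv_defs eqs trans_CrashD[OF t] .
qed

lemma tlcr_inv_trans:
  assumes "tlcr_inv n tr \<sigma>" and "trans n tr \<sigma> a \<sigma>'"
  shows "tlcr_inv n tr \<sigma>'"
  using assms
  by (cases a) (metis tlcr_inv_Invoke, metis tlcr_inv_Recv, metis tlcr_inv_Return, metis tlcr_inv_Crash)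

context
  fixes n tr :: nat and \<sigma> \<sigma>' :: "'m sys" and a :: "'m act"
  assumes I: "tlcr_inv n tr \<sigma>" and t: "trans n tr \<sigma> a \<sigma>'"
begin

lemma length_Rs_trans:
  "length (Rs \<sigma>' x) = (if \<exists>m. a = Invoke x m then Suc (length (Rs \<sigma> x)) else length (Rs \<sigma> x))"
proof (cases a)
  case (Invoke y m)
  then show ?thesis using Rs_Invoke(1)[OF I t[unfolded Invoke]] by auto
next
  case (Recv y z)
  then show ?thesis using Rs_Recv(1)[OF I t[unfolded Recv]] by simp
next
  case (Return y)
  then show ?thesis using trans_ReturnD(2)[OF t[unfolded Return]] by simp
next
  case (Crash y)
  then show ?thesis using trans_CrashD(1)[OF t[unfolded Crash]] by simp
qed

lemma busy_trans:
  "busy \<sigma>' x = (if \<exists>m. a = Invoke x m then True else if a = Return x then False else busy \<sigma> x)"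
proof (cases a)
  case (Invoke y m)
  then show ?thesis using Invoke_fields(3)[OF I t[unfolded Invoke]] by auto
next
  case (Recv y z)
  then show ?thesis using trans_RecvD(3)[OF t[unfolded Recv]] by simp
next
  case (Return y)
  then show ?thesis using trans_ReturnD(3)[OF t[unfolded Return]] by simp
next
  case (Crash y)
  then show ?thesis using trans_CrashD(2)[OF t[unfolded Crash]] by simp
qed

lemma sent_trans: "sent \<sigma> x k = Some v \<Longrightarrow> sent \<sigma>' x k = Some v"
proof (cases a)
  case (Invoke y m)
  then show "sent \<sigma> x k = Some v \<Longrightarrow> ?thesis" using sent_Invoke[OF I t[unfolded Invoke]] by simp
next
  case (Recv y z)
  then show "sent \<sigma> x k = Some v \<Longrightarrow> ?thesis" using trans_RecvD(5)[OF t[unfolded Recv]] by simp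
next
  case (Return y)
  then show "sent \<sigma> x k = Some v \<Longrightarrow> ?thesis" using trans_ReturnD(4)[OF t[unfolded Return]] by simp
next
  case (Crash y)
  then show "sent \<sigma> x k = Some v \<Longrightarrow> ?thesis" using trans_CrashD(3)[OF t[unfolded Crash]] by simp
qed

lemma cur_set_trans:
  assumes "length (Rs \<sigma>' x) = length (Rs \<sigma> x)"
  shows "cur_set \<sigma> x \<subseteq> cur_set \<sigma>' x"
proof (cases a)
  case (Invoke y m)
  then have "x \<noteq> y" using assms length_Rs_trans by auto
  then show ?thesis
    using Invoke_fields(2)[OF I t[unfolded Invoke]] by (simp add: cur_set_def)
next
  case (Recv y z)
  then show ?thesis using cur_set_Recv_mono[OF I t[unfolded Recv]] by simp
next
  case (Return y)
  then show ?thesis using trans_ReturnD(2)[OF t[unfolded Return]] by (simp add: cur_set_def)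
next
  case (Crash y)
  then show ?thesis using trans_CrashD(1)[OF t[unfolded Crash]] by (simp add: cur_set_def)
qed

lemma consumed_trans:
  assumes "i \<in> {1..n}"
  shows "consumed \<sigma>' j i = consumed \<sigma> j i + (if a = Recv i j then 1 else 0)"
proof (cases a)
  case (Invoke y m)
  then show ?thesis using consumed_Invoke[OF I t[unfolded Invoke] assms] by simp
next
  case (Recv y z)
  then show ?thesis using consumed_Recv[OF I t[unfolded Recv]] by auto
next
  case (Return y)
  then show ?thesis using trans_ReturnD(2,4,5)[OF t[unfolded Return]] by (simp add: consumed_def bcast_log_def)
next
  case (Crash y)
  then show ?thesis using trans_CrashD(1,3,4)[OF t[unfolded Crash]] by (simp add: consumed_def bcast_log_def)
qed

end

section \<open>Executions\<close>

locale tlcr_run =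
  fixes n tr :: nat and \<sigma> :: "nat \<Rightarrow> 'm sys" and act :: "nat \<Rightarrow> 'm act option"
  assumes exec: "tlcr_exec n tr \<sigma> act"
begin

abbreviation len :: "nat \<Rightarrow> nat \<Rightarrow> nat" where
  "len t x \<equiv> length (Rs (\<sigma> t) x)"

lemma step_cases:
  obtains "act t = None" "\<sigma> (Suc t) = \<sigma> t"
  | a where "act t = Some a" "trans n tr (\<sigma> t) a (\<sigma> (Suc t))"
proof -
  have "case act t of None \<Rightarrow> \<sigma> (Suc t) = \<sigma> t | Some a \<Rightarrow> trans n tr (\<sigma> t) a (\<sigma> (Suc t))"
    using exec by (simp add: tlcr_exec_def)
  then show thesis using that by (cases "act t") auto
qed

lemma fair_Recv: "\<exists>t\<ge>t0. \<not> recv_enabled n tr (\<sigma> t) i j \<or> act t = Some (Recv i j)"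
  using exec unfolding tlcr_exec_def by blast

lemma fair_Return: "\<exists>t\<ge>t0. \<not> ret_enabled n tr (\<sigma> t) i \<or> act t = Some (Return i)"
  using exec unfolding tlcr_exec_def by blast

lemma fair_Invoke: "\<exists>t\<ge>t0. \<not> inv_enabled n (\<sigma> t) i \<or> (\<exists>m. act t = Some (Invoke i m))"
  using exec unfolding tlcr_exec_def by blast

lemma len_0: "len 0 x = 1" and not_busy_0: "\<not> busy (\<sigma> 0) x"
  using exec by (simp_all add: tlcr_exec_def init_sys_def)

lemma tlcr_inv_run: "tlcr_inv n tr (\<sigma> t)"
proof (induction t)
  case 0
  then show ?case using exec tlcr_inv_init by (simp add: tlcr_exec_def)
next
  case (Suc t)
  then show ?case by (cases t rule: step_cases) (auto intro: tlcr_inv_trans)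
qed

lemma len_Suc: "len (Suc t) x = (if \<exists>m. act t = Some (Invoke x m) then Suc (len t x) else len t x)"
  by (cases t rule: step_cases) (auto simp: length_Rs_trans[OF tlcr_inv_run])

lemma busy_Suc: "busy (\<sigma> (Suc t)) x = (if \<exists>m. act t = Some (Invoke x m) then True
    else if act t = Some (Return x) then False else busy (\<sigma> t) x)"
  by (cases t rule: step_cases) (auto simp: busy_trans[OF tlcr_inv_run])

lemma consumed_Suc:
  "i \<in> {1..n} \<Longrightarrow> consumed (\<sigma> (Suc t)) j i = consumed (\<sigma> t) j i + (if act t = Some (Recv i j) then 1 else 0)"
  by (cases t rule: step_cases) (auto simp: consumed_trans[OF tlcr_inv_run])

lemma len_mono: "t \<le> t' \<Longrightarrow> len t x \<le> len t' x"
  by (rule lift_Suc_mono_le[of "\<lambda>t. len t x"]) (simp_all add: len_Suc)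

lemma consumed_mono: "i \<in> {1..n} \<Longrightarrow> t \<le> t' \<Longrightarrow> consumed (\<sigma> t) j i \<le> consumed (\<sigma> t') j i"
  by (rule lift_Suc_mono_le[of "\<lambda>t. consumed (\<sigma> t) j i"]) (simp_all add: consumed_Suc)

lemma sent_mono: "t \<le> t' \<Longrightarrow> sent (\<sigma> t) x k = Some v \<Longrightarrow> sent (\<sigma> t') x k = Some v"
proof (induction t' rule: dec_induct)
  case (step s)
  then show ?case by (cases s rule: step_cases) (auto intro: sent_trans[OF tlcr_inv_run])
qed simp

lemma sent_unique: "sent (\<sigma> t) x k = Some v \<Longrightarrow> sent (\<sigma> t') x k = Some v' \<Longrightarrow> v = v'"
  using sent_mono[of t "max t t'"] sent_mono[of t' "max t t'"] by fastforce

lemma cur_set_mono: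
  "t \<le> t' \<Longrightarrow> len t' x = len t x \<Longrightarrow> cur_set (\<sigma> t) x \<subseteq> cur_set (\<sigma> t') x"
proof (induction t' rule: dec_induct)
  case (step s)
  have "len t x \<le> len s x" "len s x \<le> len (Suc s) x" using len_mono step.hyps by auto
  then have "len s x = len t x" and same: "len (Suc s) x = len s x" using step.prems by auto
  then have "cur_set (\<sigma> t) x \<subseteq> cur_set (\<sigma> s) x" using step.IH by simp
  also have "\<dots> \<subseteq> cur_set (\<sigma> (Suc s)) x"
  proof (cases s rule: step_cases)
    case (2 a)
    show ?thesis using cur_set_trans[OF tlcr_inv_run 2(2) same] .
  qed simp
  finally show ?case .
qed simp

section \<open>Liveness\<close>

lemma correct_not_crashed: "\<not> fails \<sigma> x \<Longrightarrow> \<not> crashed (\<sigma> t) x"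
  by (auto simp: fails_def)

lemma idle_node_invokes:
  assumes x: "x \<in> {1..n}" and nf: "\<not> fails \<sigma> x" and idle: "\<not> busy (\<sigma> t) x"
  shows "\<exists>t'. Suc (len t x) \<le> len t' x"
proof (rule ccontr)
  assume "\<not> ?thesis"
  then have bounded: "len t' x \<le> len t x" for t' by (meson not_less_eq_eq)
  have still: "\<not> busy (\<sigma> (t + d)) x \<and> len (t + d) x = len t x" for d
  proof (induction d)
    case (Suc d)
    then have "\<nexists>m. act (t + d) = Some (Invoke x m)"
      using bounded[of "Suc (t + d)"] len_Suc[of "t + d" x] by auto
    then show ?case using Suc.IH len_Suc[of "t + d" x] busy_Suc[of "t + d" x] by auto
  qed (simp add: idle)
  obtain s where s: "s \<ge> t" "\<not> inv_enabled n (\<sigma> s) x \<or> (\<exists>m. act s = Some (Invoke x m))"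
    using fair_Invoke by blast
  moreover have "inv_enabled n (\<sigma> s) x"
    using still[of "s - t"] s(1) x correct_not_crashed[OF nf] by (simp add: inv_enabled_def)
  ultimately obtain m where "act s = Some (Invoke x m)" by blast
  then show False using bounded[of "Suc s"] len_Suc[of s x] still[of "s - t"] s(1) by simp
qed

lemma step_done_advances:
  assumes x: "x \<in> {1..n}" and nf: "\<not> fails \<sigma> x" and d: "step_done (\<sigma> t) x k"
  shows "\<exists>t'. Suc (Suc k) \<le> len t' x"
  using d idle_node_invokes[OF x nf, of t] by (auto simp: step_done_def Suc_le_eq)

lemma full_node_returns:
  assumes x: "x \<in> {1..n}" and nf: "\<not> fails \<sigma> x" and full: "tr \<le> card (cur_set (\<sigma> t) x)"
  shows "\<exists>t'\<ge>t. \<not> (busy (\<sigma> t') x \<and> len t' x = len t x)"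
proof (rule ccontr)
  assume "\<not> ?thesis"
  then have stay: "busy (\<sigma> t') x \<and> len t' x = len t x" if "t' \<ge> t" for t' using that by blast
  have enabled: "ret_enabled n tr (\<sigma> s) x" if s: "s \<ge> t" for s
  proof -
    have "cur_set (\<sigma> t) x \<subseteq> cur_set (\<sigma> s) x" using cur_set_mono s stay[OF s] by simp
    then have "tr \<le> card (cur_set (\<sigma> s) x)"
      using full card_mono[OF inv_finite_cur_set[OF tlcr_inv_run]] by (meson le_trans)
    then show ?thesis using stay[OF s] x correct_not_crashed[OF nf] by (simp add: ret_enabled_def)
  qed
  obtain s where "s \<ge> t" "\<not> ret_enabled n tr (\<sigma> s) x \<or> act s = Some (Return x)"
    using fair_Return by blast
  then have "s \<ge> t" "act s = Some (Return x)" using enabled by blast+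
  then show False using stay[of "Suc s"] busy_Suc[of s x] by simp
qed

definition blocked :: "nat \<Rightarrow> nat \<Rightarrow> nat \<Rightarrow> bool" where
  "blocked i K T \<longleftrightarrow> i \<in> {1..n} \<and> \<not> fails \<sigma> i \<and>
     (\<forall>t\<ge>T. busy (\<sigma> t) i \<and> len t i = Suc K \<and> card (cur_set (\<sigma> t) i) < tr)"

lemma never_done_blocked:
  assumes x: "x \<in> {1..n}" and nf: "\<not> fails \<sigma> x" and K: "1 \<le> K" and arrived: "Suc K \<le> len T x"
    and never: "\<And>t. \<not> step_done (\<sigma> t) x K"
  shows "blocked x K T"
proof -
  have stay: "busy (\<sigma> t) x \<and> len t x = Suc K" if "t \<ge> T" for t
    using never[of t] K arrived len_mono[OF that, of x] by (auto simp: step_done_def)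
  have "card (cur_set (\<sigma> t) x) < tr" if "t \<ge> T" for t
  proof (rule ccontr)
    assume "\<not> ?thesis"
    then obtain t' where "t' \<ge> t" "\<not> (busy (\<sigma> t') x \<and> len t' x = len t x)"
      using full_node_returns[OF x nf] by (meson not_less)
    then show False using stay that by auto
  qed
  then show ?thesis using x nf stay by (simp add: blocked_def)
qed

lemma blocked_consumed_le:
  assumes blk: "blocked i K T" and t: "t \<ge> T"
  shows "consumed (\<sigma> t) j i \<le> K"
proof -
  have i: "i \<in> {1..n}" and "busy (\<sigma> t) i" "len t i = Suc K" "card (cur_set (\<sigma> t) i) < tr"
    using blk t by (auto simp: blocked_def)
  then show ?thesis using inv_chan(2,3)[OF tlcr_inv_run i, of t j] by fastforce
qed

lemma blocked_drains_chan:
  assumes blk: "blocked i K T"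
  shows "\<exists>t\<ge>t0. chan (\<sigma> t) j i = []"
proof (rule ccontr)
  assume "\<not> ?thesis"
  then have ne: "chan (\<sigma> t) j i \<noteq> []" if "t \<ge> max T t0" for t using that by auto
  have i: "i \<in> {1..n}" and nf: "\<not> fails \<sigma> i" using blk by (auto simp: blocked_def)
  have "\<exists>t\<ge>max T t0. d \<le> consumed (\<sigma> t) j i" for d
  proof (induction d)
    case (Suc d)
    then obtain t where t: "t \<ge> max T t0" "d \<le> consumed (\<sigma> t) j i" by blast
    obtain s where s: "s \<ge> t" "\<not> recv_enabled n tr (\<sigma> s) i j \<or> act s = Some (Recv i j)"
      using fair_Recv by blast
    have "recv_enabled n tr (\<sigma> s) i j"
      using blk s(1) t(1) i correct_not_crashed[OF nf] ne[of s] by (auto simp: blocked_def recv_enabled_def)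
    then have "act s = Some (Recv i j)" using s(2) by blast
    then have "consumed (\<sigma> (Suc s)) j i = Suc (consumed (\<sigma> s) j i)" using consumed_Suc[OF i] by simp
    moreover have "consumed (\<sigma> t) j i \<le> consumed (\<sigma> s) j i" using consumed_mono[OF i s(1)] .
    ultimately show ?case using t s(1) by (intro exI[of _ "Suc s"]) auto
  qed (intro exI[of _ "max T t0"], simp)
  then obtain t where "t \<ge> max T t0" "Suc K \<le> consumed (\<sigma> t) j i" by blast
  then show False using blocked_consumed_le[OF blk, of t j] by simp
qed

lemma blocked_bounds_len:
  assumes blk: "blocked i K T"
  shows "len t j \<le> Suc K"
proof (rule ccontr)
  assume far: "\<not> ?thesis"
  have i: "i \<in> {1..n}" using blk by (simp add: blocked_def)
  have "chan (\<sigma> s) j i \<noteq> []" if s: "s \<ge> max T t" for s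
  proof -
    have "Suc (Suc K) \<le> len s j" using far len_mono[of t s j] s by simp
    then have "consumed (\<sigma> s) j i < length (bcast_log (\<sigma> s) j)"
      using blocked_consumed_le[OF blk, of s j] s by (simp add: length_bcast_log)
    then show ?thesis using inv_chan(1)[OF tlcr_inv_run i, of s j] by auto
  qed
  then show False using blocked_drains_chan[OF blk, of "max T t" j] by auto
qed

lemma blocked_consumes_step:
  assumes blk: "blocked i K T" and stays: "\<And>t. t \<ge> t0 \<Longrightarrow> len t j = Suc K"
  shows "\<exists>t\<ge>max T t0. consumed (\<sigma> t) j i = K"
proof -
  obtain t where t: "t \<ge> max T t0" "chan (\<sigma> t) j i = []"
    using blocked_drains_chan[OF blk] by blast
  then have "consumed (\<sigma> t) j i = K" using stays[of t] by (simp add: consumed_def length_bcast_log)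
  then show ?thesis using t by blast
qed

lemma consumed_crossing:
  assumes i: "i \<in> {1..n}"
  shows "ta \<le> tb \<Longrightarrow> consumed (\<sigma> ta) j i \<le> v \<Longrightarrow> v < consumed (\<sigma> tb) j i \<Longrightarrow>
    \<exists>t. ta \<le> t \<and> t < tb \<and> consumed (\<sigma> t) j i = v \<and> act t = Some (Recv i j)"
proof (induction tb)
  case (Suc tb)
  show ?case
  proof (cases "v < consumed (\<sigma> tb) j i")
    case True
    moreover have "ta \<le> tb" using Suc.prems True by (metis le_SucE not_le)
    ultimately show ?thesis using Suc.IH Suc.prems(2) less_SucI by blast
  next
    case False
    then have "act tb = Some (Recv i j) \<and> consumed (\<sigma> tb) j i = v"
      using consumed_Suc[OF i, of tb j] Suc.prems(3) by (auto split: if_splits)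
    moreover have "ta \<le> tb" using Suc.prems False by (metis le_SucE not_le)
    ultimately show ?thesis by blast
  qed
qed simp

lemma blocked_hears_sender:
  assumes blk: "blocked i K T" and K: "1 \<le> K" and early: "consumed (\<sigma> T) j i < K"
    and stays: "\<And>t. t \<ge> tj \<Longrightarrow> len t j = Suc K"
  shows "\<forall>\<^sub>F t in at_top. j \<in> fst ` cur_set (\<sigma> t) i"
proof -
  have i: "i \<in> {1..n}" and blk_at: "\<And>t. t \<ge> T \<Longrightarrow> len t i = Suc K"
    using blk by (auto simp: blocked_def)
  obtain t3 where t3: "t3 \<ge> max T tj" "consumed (\<sigma> t3) j i = K"
    using blocked_consumes_step[OF blk stays] by blast
  have "T \<le> t3" and "consumed (\<sigma> T) j i \<le> K - 1" and "K - 1 < consumed (\<sigma> t3) j i"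
    using t3 early K by auto
  then obtain t where t: "T \<le> t" "consumed (\<sigma> t) j i = K - 1" and recv: "act t = Some (Recv i j)"
    using consumed_crossing[OF i] by blast
  have tr: "trans n tr (\<sigma> t) (Recv i j) (\<sigma> (Suc t))"
    using recv by (cases t rule: step_cases) auto
  have "Suc (Suc (consumed (\<sigma> t) j i)) = length (Rs (\<sigma> t) i)"
    using t K blk_at by simp
  then have "j \<in> fst ` cur_set (\<sigma> (Suc t)) i"
    using Rs_Recv(3)[OF tlcr_inv_run tr] process_head[OF tlcr_inv_run trans_RecvD(1)[OF tr]]
    by (simp add: image_iff)
  moreover have "cur_set (\<sigma> (Suc t)) i \<subseteq> cur_set (\<sigma> t') i" if "t' \<ge> Suc t" for t'
    using cur_set_mono[OF that] blk_at that t(1) by simp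
  ultimately show ?thesis unfolding eventually_at_top_linorder by blast
qed

lemma blocked_hears_fewer_than_threshold:
  assumes blk: "blocked i K T" and "finite C"
    and hears: "\<And>j. j \<in> C \<Longrightarrow> \<forall>\<^sub>F t in at_top. j \<in> fst ` cur_set (\<sigma> t) i"
  shows "card C < tr"
proof -
  have "\<forall>\<^sub>F t in at_top. \<forall>j\<in>C. j \<in> fst ` cur_set (\<sigma> t) i"
    using \<open>finite C\<close> hears by (intro eventually_ball_finite) auto
  moreover have "\<forall>\<^sub>F t in at_top. t \<ge> T" by simp
  ultimately have "\<forall>\<^sub>F t in at_top. t \<ge> T \<and> C \<subseteq> fst ` cur_set (\<sigma> t) i"
    by eventually_elim auto
  then obtain t where "t \<ge> T" "C \<subseteq> fst ` cur_set (\<sigma> t) i"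
    by (auto simp: eventually_at_top_linorder)
  then have "card C \<le> card (fst ` cur_set (\<sigma> t) i)"
    using inv_finite_cur_set[OF tlcr_inv_run] by (simp add: card_mono)
  also have "\<dots> \<le> card (cur_set (\<sigma> t) i)"
    using inv_finite_cur_set[OF tlcr_inv_run] by (rule card_image_le)
  also have "\<dots> < tr" using blk \<open>t \<ge> T\<close> by (simp add: blocked_def)
  finally show ?thesis .
qed

lemma blocked_blocks_correct:
  assumes blk: "blocked i K T" and x: "x \<in> {1..n}" and nf: "\<not> fails \<sigma> x" and K: "1 \<le> K"
    and arrived: "Suc K \<le> len t x"
  shows "blocked x K t"
proof (rule never_done_blocked[OF x nf K arrived])
  fix t'
  show "\<not> step_done (\<sigma> t') x K"
    using step_done_advances[OF x nf] blocked_bounds_len[OF blk] by (meson not_less_eq_eq)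
qed

(* Take the node of C that enters step K first: at that moment no node of C has yet broadcast in
   step K. *)
lemma first_arrival:
  assumes i: "i \<in> C" and C: "C \<subseteq> {1..n}" and K: "1 \<le> K"
    and reach: "\<And>j. j \<in> C \<Longrightarrow> \<exists>t. Suc K \<le> len t j"
  obtains i0 T0 where "i0 \<in> C" "Suc K \<le> len T0 i0" "\<And>j. j \<in> C \<Longrightarrow> consumed (\<sigma> T0) j i0 < K"
proof -
  define E where "E j = (LEAST t. Suc K \<le> len t j)" for j
  obtain i0 where i0: "i0 \<in> C" "\<And>j. j \<in> C \<Longrightarrow> E i0 \<le> E j"
    using ex_has_least_nat[of "\<lambda>j. j \<in> C" i E] i by blast
  define T0 where "T0 = E i0"
  have arrived: "Suc K \<le> len T0 i0" using reach[OF i0(1)] unfolding T0_def E_def by (rule LeastI_ex)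
  then obtain T where T0: "T0 = Suc T" using K len_0[of i0] by (cases T0) auto
  have before: "len T j \<le> K" if "j \<in> C" for j
  proof -
    have "T < E j" using i0(2)[OF that] T0 unfolding T0_def by simp
    then show ?thesis using not_less_Least[of T "\<lambda>t. Suc K \<le> len t j"] unfolding E_def by simp
  qed
  have "\<exists>m. act T = Some (Invoke i0 m)"
    using arrived before[OF i0(1)] len_Suc[of T i0] T0 by (auto split: if_splits)
  then have "consumed (\<sigma> T0) j i0 = consumed (\<sigma> T) j i0" for j
    using consumed_Suc[of i0 T j] C i0(1) T0 by auto
  moreover have "consumed (\<sigma> T) j i0 < K" if "j \<in> C" for j
    using consumed_le_length_bcast_log[of "\<sigma> T" j i0] before[OF that] K by (simp add: length_bcast_log)
  ultimately show thesis using that i0(1) arrived by simp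
qed

lemma correct_nodes_complete_step:
  assumes C_def: "C = {i \<in> {1..n}. \<not> fails \<sigma> i}" and trC: "tr \<le> card C" and K: "1 \<le> K"
    and reach: "\<And>j. j \<in> C \<Longrightarrow> \<exists>t. Suc K \<le> len t j" and i: "i \<in> C"
  shows "\<exists>t. step_done (\<sigma> t) i K"
proof (rule ccontr)
  assume never: "\<not> ?thesis"
  have C: "C \<subseteq> {1..n}" and correct: "\<And>j. j \<in> C \<Longrightarrow> j \<in> {1..n} \<and> \<not> fails \<sigma> j"
    using C_def by auto
  obtain ti where "Suc K \<le> len ti i" using reach[OF i] by blast
  then have blk: "blocked i K ti" using never_done_blocked correct[OF i] K never by blast
  have blocked_from_arrival: "blocked j K t" if "j \<in> C" "Suc K \<le> len t j" for j t
    using blocked_blocks_correct[OF blk _ _ K] correct that by blast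
  obtain i0 T0 where i0: "i0 \<in> C" "Suc K \<le> len T0 i0" and early: "\<And>j. j \<in> C \<Longrightarrow> consumed (\<sigma> T0) j i0 < K"
    using first_arrival[OF i C K reach] by blast
  have blk0: "blocked i0 K T0" using blocked_from_arrival[OF i0] .
  have "\<forall>\<^sub>F t in at_top. j \<in> fst ` cur_set (\<sigma> t) i0" if j: "j \<in> C" for j
  proof -
    obtain tj where "Suc K \<le> len tj j" using reach[OF j] by blast
    then have "len t j = Suc K" if "t \<ge> tj" for t
      using blocked_from_arrival[OF j] that by (simp add: blocked_def)
    then show ?thesis by (rule blocked_hears_sender[OF blk0 K early[OF j]])
  qed
  moreover have "finite C" using C_def by simp
  ultimately have "card C < tr" using blocked_hears_fewer_than_threshold[OF blk0] by blast
  then show False using trC by simp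
qed

lemma correct_nodes_reach_step:
  assumes C_def: "C = {i \<in> {1..n}. \<not> fails \<sigma> i}" and trC: "tr \<le> card C" and j: "j \<in> C"
  shows "\<exists>t. Suc K \<le> len t j"
  using j
proof (induction K arbitrary: j)
  case 0
  then show ?case using inv_Rs_nonempty[OF tlcr_inv_run] by (simp add: Suc_le_eq)
next
  case (Suc K)
  then have x: "j \<in> {1..n}" and nf: "\<not> fails \<sigma> j" using C_def by auto
  show ?case
  proof (cases "K = 0")
    case True
    then show ?thesis using idle_node_invokes[OF x nf not_busy_0] len_0 by simp
  next
    case False
    then obtain t where "step_done (\<sigma> t) j K"
      using correct_nodes_complete_step[OF C_def trC _ Suc.IH Suc.prems] by auto
    then show ?thesis by (rule step_done_advances[OF x nf])
  qed
qed

section \<open>Threshold synchronous broadcast\<close>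

lemma correct_invocation_returns:
  assumes trC: "tr \<le> card {i \<in> {1..n}. \<not> fails \<sigma> i}"
    and i: "i \<in> {1..n}" and nf: "\<not> fails \<sigma> i" and iv: "invoked \<sigma> i k"
  shows "\<exists>R B. returned \<sigma> i k R B"
proof -
  have iC: "i \<in> {i \<in> {1..n}. \<not> fails \<sigma> i}" using i nf by simp
  have "1 \<le> k" using iv inv_sent_iff[OF tlcr_inv_run] by (auto simp: invoked_def)
  then obtain t where "step_done (\<sigma> t) i k"
    using correct_nodes_complete_step[OF refl trC _ correct_nodes_reach_step[OF refl trC] iC] by blast
  then obtain R B where "ret (\<sigma> t) i k = Some (R, B)" using inv_ret_iff_done[OF tlcr_inv_run] by fast
  then show ?thesis by (auto simp: returned_def)
qed

lemma receive_threshold: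
  assumes "returned \<sigma> i k R B"
  shows "\<exists>N \<subseteq> {1..n}. tr \<le> card N \<and> (\<forall>j\<in>N. \<exists>m. bcast \<sigma> j k m) \<and> R = {m. \<exists>j\<in>N. bcast \<sigma> j k m}"
proof -
  obtain t where r: "ret (\<sigma> t) i k = Some (R, B)" using assms by (auto simp: returned_def)
  define S where "S = Rs (\<sigma> t) i ! k"
  have finished: "step_done (\<sigma> t) i k" using r inv_ret_iff_done[OF tlcr_inv_run] by blast
  have R: "R = snd ` S" using r inv_ret_recv_set[OF tlcr_inv_run] unfolding S_def by blast
  have "k < len t i" using finished by (auto simp: step_done_def)
  then have genuine: "fst x \<in> {1..n} \<and> sent (\<sigma> t) (fst x) k = Some (snd x)" if "x \<in> S" for x
    using that inv_recv_genuine[OF tlcr_inv_run] unfolding S_def by blast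
  have "inj_on fst S" using genuine by (intro inj_onI) (metis option.inject prod.expand)
  then have "tr \<le> card (fst ` S)"
    using finished inv_done_full[OF tlcr_inv_run] by (simp add: card_image S_def)
  moreover have "{m. \<exists>j\<in>fst ` S. bcast \<sigma> j k m} = R"
  proof (intro set_eqI iffI)
    fix m assume "m \<in> {m. \<exists>j\<in>fst ` S. bcast \<sigma> j k m}"
    then obtain x t' where x: "x \<in> S" and "sent (\<sigma> t') (fst x) k = Some m" by (auto simp: bcast_def)
    then have "m = snd x" using genuine[OF x] sent_unique by blast
    then show "m \<in> R" using x R by blast
  next
    fix m assume "m \<in> R"
    then obtain x where x: "x \<in> S" and "m = snd x" using R by blast
    then have "bcast \<sigma> (fst x) k m" using genuine[OF x] by (auto simp: bcast_def)
    then show "m \<in> {m. \<exists>j\<in>fst ` S. bcast \<sigma> j k m}" using x by blast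
  qed
  ultimately show ?thesis using genuine by (intro exI[of _ "fst ` S"]) (auto simp: bcast_def)
qed

lemma returned_no_broadcast_set: "returned \<sigma> i k R B \<Longrightarrow> B = {}"
  by (auto simp: returned_def dest: inv_ret_recv_set[OF tlcr_inv_run])

end

lemma card_correct_nodes:
  assumes "tr \<le> n" and "f \<le> n - tr" and "card {i \<in> {1..n}. fails \<sigma> i} \<le> f"
  shows "tr \<le> card {i \<in> {1..n}. \<not> fails \<sigma> i}"
proof -
  define F where "F = {i \<in> {1..n}. fails \<sigma> i}"
  have correct: "{i \<in> {1..n}. \<not> fails \<sigma> i} = {1..n} - F" by (auto simp: F_def)
  have "card {i \<in> {1..n}. \<not> fails \<sigma> i} = n - card F"
    unfolding correct by (subst card_Diff_subset) (auto simp: F_def)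
  then show ?thesis using assms unfolding F_def by linarith
qed

theorem theorem2:
  fixes n tr f :: nat and \<sigma> :: "nat \<Rightarrow> 'm sys" and act :: "nat \<Rightarrow> 'm act option"
  assumes "tr \<le> n"
    and "f \<le> n - tr"
    and "card {i \<in> {1..n}. fails \<sigma> i} \<le> f"
    and "tlcr_exec n tr \<sigma> act"
  shows "TSB n tr 0 0 (invoked \<sigma>) (bcast \<sigma>) (returned \<sigma>) (fails \<sigma>)"
proof -
  interpret tlcr_run n tr \<sigma> act by (rule tlcr_run.intro) fact
  have trC: "tr \<le> card {i \<in> {1..n}. \<not> fails \<sigma> i}" using assms(1-3) by (rule card_correct_nodes)
  show ?thesis
    unfolding TSB_def
    using correct_invocation_returns[OF trC] receive_threshold
    by (intro conjI) (blast, blast, auto intro!: exI[of _ "{}"] dest: returned_no_broadcast_set)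
qed

end
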